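(* Let $N\ge 2$, let $c_1,\dots,c_N$ be positive real numbers and $\nu_1,\dots,\nu_N$ positive integers, and put $q=1/\sum_{i=1}^N\nu_i^{-1}$. Then for $\mathrm{Re}\,s>0$ the integral below converges absolutely and \[\int_{H_N}\Big(\sum_{i=1}^Nc_ie^{-\nu_ix_i}\Big)^{-s}d\lambda=q\,(\nu_1\cdots\nu_N)^{-1}\Big(\prod_{i=1}^Nc_i^{q/\nu_i}\Big)^{-s}\Gamma(s)^{-1}\prod_{i=1}^N\Gamma(qs/\nu_i).\]
   Context: $H_N=\{x\in\mathbb{R}^N:\sum_i x_i=0\}$ and $d\lambda$ is Lebesgue measure on $H_N$, normalized so that it corresponds to Lebesgue measure $dx_1\cdots dx_{N-1}$ on $\mathbb{R}^{N-1}$ under the parametrization $(x_1,\dots,x_{N-1})\mapsto(x_1,\dots,x_{N-1},-x_1-\dots-x_{N-1})$. Complex powers of positive reals use the real logarithm. *)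

theory Defs
  imports "HOL-Analysis.Analysis"
begin

text \<open>Parametrization of the hyperplane H_N = {x. sum x = 0} by its first N-1
  coordinates (indices 0..N-2); coordinate N-1 is minus the sum of the others.\<close>
definition hyp_point :: "nat \<Rightarrow> (nat \<Rightarrow> real) \<Rightarrow> nat \<Rightarrow> real" where
  "hyp_point N y i = (if i < N - 1 then y i else - (\<Sum>j<N - 1. y j))"

end

theory Submission
  imports Defs
begin

(* Put w_i = q / nu_i, so that sum_i w_i = 1. For Re z > 0 the substitution t = c e^(-nu x) in Euler's
   integral gives
     Gamma (z / nu) / (nu c^(z / nu)) = integral over R of exp (-c e^(-nu x)) e^(-x z) dx.
   Multiply these N integrals for (c_i, nu_i) and z = q s, and change variables by t_i = x_i + S w_i
   with x in H_N and S in R: this linear map has determinant one, and because nu_i w_i = q and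
   sum_i x_i = 0 the product of the integrands becomes exp (-F x e^(-q S)) e^(-q s S), where
   F x = sum_i c_i e^(-nu_i x_i). By the same one-dimensional formula the S-integral of this is
   Gamma s / (q (F x)^s), and Fubini on H_N x R yields the theorem. *)

lemma distr_pair_measure_fiberwise_snd:
  assumes "sigma_finite_measure M1" "sigma_finite_measure M2"
    and F: "(\<lambda>(x, y). (x, T x y)) \<in> M1 \<Otimes>\<^sub>M M2 \<rightarrow>\<^sub>M M1 \<Otimes>\<^sub>M M2"
    and preserving: "\<And>x. x \<in> space M1 \<Longrightarrow> distr M2 M2 (T x) = M2"
  shows "distr (M1 \<Otimes>\<^sub>M M2) (M1 \<Otimes>\<^sub>M M2) (\<lambda>(x, y). (x, T x y)) = M1 \<Otimes>\<^sub>M M2"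
proof (rule measure_eqI)
  interpret pair_sigma_finite M1 M2
    using assms(1,2) by (simp add: pair_sigma_finite_def)
  have T: "T x \<in> M2 \<rightarrow>\<^sub>M M2" if "x \<in> space M1" for x
    using measurable_compose[OF measurable_Pair1'[OF that] F] by (simp add: measurable_pair_iff comp_def)
  fix A assume "A \<in> sets (distr (M1 \<Otimes>\<^sub>M M2) (M1 \<Otimes>\<^sub>M M2) (\<lambda>(x, y). (x, T x y)))"
  then have A: "A \<in> sets (M1 \<Otimes>\<^sub>M M2)" by simp
  have "emeasure (distr (M1 \<Otimes>\<^sub>M M2) (M1 \<Otimes>\<^sub>M M2) (\<lambda>(x, y). (x, T x y))) A
      = \<integral>\<^sup>+ z. indicator A ((\<lambda>(x, y). (x, T x y)) z) \<partial>(M1 \<Otimes>\<^sub>M M2)"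
    using A F by (simp flip: nn_integral_indicator add: nn_integral_distr)
  also have "\<dots> = \<integral>\<^sup>+ x. \<integral>\<^sup>+ y. indicator A (x, T x y) \<partial>M2 \<partial>M1"
    using A F by (subst M2.nn_integral_fst[symmetric]) (auto intro: measurable_compose)
  also have "\<dots> = \<integral>\<^sup>+ x. \<integral>\<^sup>+ y. indicator A (x, y) \<partial>distr M2 M2 (T x) \<partial>M1"
    using A T by (intro nn_integral_cong) (simp add: nn_integral_distr measurable_Pair1')
  also have "\<dots> = \<integral>\<^sup>+ x. \<integral>\<^sup>+ y. indicator A (x, y) \<partial>M2 \<partial>M1"
    by (intro nn_integral_cong) (simp add: preserving)
  also have "\<dots> = emeasure (M1 \<Otimes>\<^sub>M M2) A"
    using A by (simp add: M2.emeasure_pair_measure)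
  finally show "emeasure (distr (M1 \<Otimes>\<^sub>M M2) (M1 \<Otimes>\<^sub>M M2) (\<lambda>(x, y). (x, T x y))) A
      = emeasure (M1 \<Otimes>\<^sub>M M2) A" .
qed simp

lemma distr_pair_measure_fiberwise_fst:
  assumes M1: "sigma_finite_measure M1" and M2: "sigma_finite_measure M2"
    and F: "(\<lambda>(x, y). (T y x, y)) \<in> M1 \<Otimes>\<^sub>M M2 \<rightarrow>\<^sub>M M1 \<Otimes>\<^sub>M M2"
    and preserving: "\<And>y. y \<in> space M2 \<Longrightarrow> distr M1 M1 (T y) = M1"
  shows "distr (M1 \<Otimes>\<^sub>M M2) (M1 \<Otimes>\<^sub>M M2) (\<lambda>(x, y). (T y x, y)) = M1 \<Otimes>\<^sub>M M2"
proof -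
  interpret M12: pair_sigma_finite M1 M2
    using M1 M2 by (simp add: pair_sigma_finite_def)
  interpret M21: pair_sigma_finite M2 M1
    using M1 M2 by (simp add: pair_sigma_finite_def)
  let ?swap = "\<lambda>(x, y). (y, x)" and ?F = "\<lambda>(x, y). (T y x, y)" and ?G = "\<lambda>(y, x). (y, T y x)"
  have G: "?G \<in> M2 \<Otimes>\<^sub>M M1 \<rightarrow>\<^sub>M M2 \<Otimes>\<^sub>M M1"
    using measurable_compose[OF measurable_compose[OF measurable_pair_swap' F] measurable_pair_swap']
    by (simp add: case_prod_beta')
  have "distr (M1 \<Otimes>\<^sub>M M2) (M1 \<Otimes>\<^sub>M M2) ?F = distr (M2 \<Otimes>\<^sub>M M1) (M1 \<Otimes>\<^sub>M M2) (\<lambda>z. ?F (?swap z))"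
    by (subst M12.distr_pair_swap) (simp add: distr_distr F measurable_pair_swap' comp_def)
  also have "(\<lambda>z. ?F (?swap z)) = (\<lambda>z. ?swap (?G z))"
    by (auto simp: fun_eq_iff)
  also have "distr (M2 \<Otimes>\<^sub>M M1) (M1 \<Otimes>\<^sub>M M2) \<dots> = distr (distr (M2 \<Otimes>\<^sub>M M1) (M2 \<Otimes>\<^sub>M M1) ?G) (M1 \<Otimes>\<^sub>M M2) ?swap"
    by (simp add: distr_distr G measurable_pair_swap' comp_def)
  also have "distr (M2 \<Otimes>\<^sub>M M1) (M2 \<Otimes>\<^sub>M M1) ?G = M2 \<Otimes>\<^sub>M M1"
    using M2 M1 G preserving by (rule distr_pair_measure_fiberwise_snd)
  finally show ?thesis
    by (simp flip: M12.distr_pair_swap)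
qed

lemma (in product_sigma_finite) distr_PiM_componentwise:
  assumes I: "finite I"
    and f: "\<And>i. i \<in> I \<Longrightarrow> f i \<in> M i \<rightarrow>\<^sub>M M i"
    and preserving: "\<And>i. i \<in> I \<Longrightarrow> distr (M i) (M i) (f i) = M i"
  shows "distr (Pi\<^sub>M I M) (Pi\<^sub>M I M) (\<lambda>x. \<lambda>i\<in>I. f i (x i)) = Pi\<^sub>M I M"
proof (rule PiM_eqI[OF I])
  have m: "(\<lambda>x. \<lambda>i\<in>I. f i (x i)) \<in> Pi\<^sub>M I M \<rightarrow>\<^sub>M Pi\<^sub>M I M"
    by (rule measurable_restrict) (use f in \<open>auto intro: measurable_compose[OF measurable_component_singleton]\<close>)
  fix A assume A: "\<And>i. i \<in> I \<Longrightarrow> A i \<in> sets (M i)"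
  have preimage: "(\<lambda>x. \<lambda>i\<in>I. f i (x i)) -` Pi\<^sub>E I A \<inter> space (Pi\<^sub>M I M)
      = Pi\<^sub>E I (\<lambda>i. f i -` A i \<inter> space (M i))"
    by (auto simp: space_PiM PiE_def Pi_def extensional_def)
  have sets: "f i -` A i \<inter> space (M i) \<in> sets (M i)" if "i \<in> I" for i
    using measurable_sets[OF f[OF that] A[OF that]] .
  have "emeasure (distr (Pi\<^sub>M I M) (Pi\<^sub>M I M) (\<lambda>x. \<lambda>i\<in>I. f i (x i))) (Pi\<^sub>E I A)
      = (\<Prod>i\<in>I. emeasure (M i) (f i -` A i \<inter> space (M i)))"
    using A sets I by (simp add: emeasure_distr[OF m] sets_PiM_I_finite preimage emeasure_PiM)
  also have "\<dots> = (\<Prod>i\<in>I. emeasure (M i) (A i))"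
  proof (intro prod.cong refl)
    fix i assume "i \<in> I"
    then show "emeasure (M i) (f i -` A i \<inter> space (M i)) = emeasure (M i) (A i)"
      using emeasure_distr[OF f A, of i] preserving by simp
  qed
  finally show "emeasure (distr (Pi\<^sub>M I M) (Pi\<^sub>M I M) (\<lambda>x. \<lambda>i\<in>I. f i (x i))) (Pi\<^sub>E I A)
      = (\<Prod>i\<in>I. emeasure (M i) (A i))" .
qed simp

lemma distr_lborel_translate: "distr lborel lborel (\<lambda>x. x + a) = (lborel :: real measure)"
  using lborel_distr_plus[of a] by (simp add: add.commute cong: distr_cong)

lemma distr_PiM_lborel_translate:
  assumes "finite I"
  shows "distr (Pi\<^sub>M I (\<lambda>_. lborel)) (Pi\<^sub>M I (\<lambda>_. lborel)) (\<lambda>x. \<lambda>i\<in>I. x i + a i)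
      = Pi\<^sub>M I (\<lambda>_. lborel :: real measure)"
proof -
  interpret product_sigma_finite "\<lambda>_. lborel :: real measure"
    by (simp add: product_sigma_finite_def sigma_finite_lborel)
  show ?thesis
    using assms by (intro distr_PiM_componentwise) (auto simp: distr_lborel_translate)
qed

lemma has_bochner_integral_measure_preserving:
  fixes f :: "'a \<Rightarrow> 'b::{banach, second_countable_topology}"
  assumes T: "T \<in> M \<rightarrow>\<^sub>M M" and preserving: "distr M M T = M"
    and f: "has_bochner_integral M f I"
  shows "has_bochner_integral M (\<lambda>x. f (T x)) I"
proof -
  have fm: "f \<in> borel_measurable M"
    using f by (auto simp: has_bochner_integral_iff)
  then show ?thesis
    using f integrable_distr_eq[OF T fm] integral_distr[OF T fm] preserving
    by (simp add: has_bochner_integral_iff)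
qed

lemma (in pair_sigma_finite) has_bochner_integral_pair_mult:
  fixes f :: "'a \<Rightarrow> 'c::{real_normed_field, banach, second_countable_topology}"
  assumes f: "integrable M1 f" and g: "integrable M2 g"
  shows "has_bochner_integral (M1 \<Otimes>\<^sub>M M2) (\<lambda>(x, y). f x * g y) (integral\<^sup>L M1 f * integral\<^sup>L M2 g)"
proof -
  have [measurable]: "f \<in> borel_measurable M1" "g \<in> borel_measurable M2"
    using f g by auto
  have integrable: "integrable (M1 \<Otimes>\<^sub>M M2) (\<lambda>(x, y). f x * g y)"
  proof (rule integrableI_bounded)
    have "(\<integral>\<^sup>+ z. ennreal (norm ((\<lambda>(x, y). f x * g y) z)) \<partial>(M1 \<Otimes>\<^sub>M M2))
        = \<integral>\<^sup>+ x. \<integral>\<^sup>+ y. ennreal (norm (f x)) * ennreal (norm (g y)) \<partial>M2 \<partial>M1"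
      by (subst M2.nn_integral_fst[symmetric]) (auto simp: norm_mult ennreal_mult)
    also have "\<dots> = (\<integral>\<^sup>+ x. ennreal (norm (f x)) \<partial>M1) * (\<integral>\<^sup>+ y. ennreal (norm (g y)) \<partial>M2)"
      by (simp add: nn_integral_cmult nn_integral_multc)
    also have "\<dots> < \<infinity>"
      using f g by (simp add: integrable_iff_bounded ennreal_mult_less_top)
    finally show "(\<integral>\<^sup>+ z. ennreal (norm ((\<lambda>(x, y). f x * g y) z)) \<partial>(M1 \<Otimes>\<^sub>M M2)) < \<infinity>" .
  qed simp
  moreover have "integral\<^sup>L (M1 \<Otimes>\<^sub>M M2) (\<lambda>(x, y). f x * g y) = integral\<^sup>L M1 f * integral\<^sup>L M2 g"
    using integral_fst'[OF integrable] by simp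
  ultimately show ?thesis
    by (simp add: has_bochner_integral_iff)
qed

lemma distr_PiM_lborel_shear:
  fixes w :: "nat \<Rightarrow> real"
  assumes w: "(\<Sum>i\<le>n. w i) = 1"
  shows "distr (Pi\<^sub>M {..<n} (\<lambda>_. lborel) \<Otimes>\<^sub>M lborel) (Pi\<^sub>M {..<n} (\<lambda>_. lborel) \<Otimes>\<^sub>M lborel)
      (\<lambda>(y, S). (\<lambda>i\<in>{..<n}. y i + S * w i, S * w n - (\<Sum>i<n. y i)))
    = Pi\<^sub>M {..<n} (\<lambda>_. lborel) \<Otimes>\<^sub>M lborel"
proof -
  define M where "M = Pi\<^sub>M {..<n} (\<lambda>_. lborel :: real measure)"
  have M: "sigma_finite_measure M"
    unfolding M_def
    by (rule product_sigma_finite.sigma_finite) (simp_all add: product_sigma_finite_def sigma_finite_lborel)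
  define shift where "shift = (\<lambda>(y, S). (\<lambda>i\<in>{..<n}. y i + S * w i, S :: real))"
  define shear where "shear = (\<lambda>(u, S). (u :: nat \<Rightarrow> real, S + - (\<Sum>i<n. u i)))"
  have shift_measurable: "shift \<in> M \<Otimes>\<^sub>M lborel \<rightarrow>\<^sub>M M \<Otimes>\<^sub>M lborel"
    and shear_measurable: "shear \<in> M \<Otimes>\<^sub>M lborel \<rightarrow>\<^sub>M M \<Otimes>\<^sub>M lborel"
    unfolding shift_def shear_def M_def by measurable
  have shift: "distr (M \<Otimes>\<^sub>M lborel) (M \<Otimes>\<^sub>M lborel) shift = M \<Otimes>\<^sub>M lborel"
    using M sigma_finite_lborel shift_measurable unfolding shift_def
    by (rule distr_pair_measure_fiberwise_fst) (simp add: M_def distr_PiM_lborel_translate)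
  have shear: "distr (M \<Otimes>\<^sub>M lborel) (M \<Otimes>\<^sub>M lborel) shear = M \<Otimes>\<^sub>M lborel"
    using M sigma_finite_lborel shear_measurable unfolding shear_def
    by (rule distr_pair_measure_fiberwise_snd) (simp add: distr_lborel_translate[of "- _", simplified])
  have w_last: "w n = 1 - (\<Sum>i<n. w i)"
    using w by (simp add: lessThan_Suc_atMost[symmetric])
  have "distr (M \<Otimes>\<^sub>M lborel) (M \<Otimes>\<^sub>M lborel)
      (\<lambda>(y, S). (\<lambda>i\<in>{..<n}. y i + S * w i, S * w n - (\<Sum>i<n. y i)))
    = distr (M \<Otimes>\<^sub>M lborel) (M \<Otimes>\<^sub>M lborel) (\<lambda>z. shear (shift z))"
    by (intro arg_cong[where f = "distr _ _"])
      (auto simp: fun_eq_iff shift_def shear_def sum.distrib sum_distrib_left[symmetric] w_last algebra_simps)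
  also have "\<dots> = distr (distr (M \<Otimes>\<^sub>M lborel) (M \<Otimes>\<^sub>M lborel) shift) (M \<Otimes>\<^sub>M lborel) shear"
    using shift_measurable shear_measurable by (simp add: distr_distr comp_def)
  also have "\<dots> = M \<Otimes>\<^sub>M lborel"
    by (simp add: shift shear)
  finally show ?thesis
    by (simp only: M_def)
qed

lemma has_bochner_integral_prod_hyp_point:
  fixes g :: "nat \<Rightarrow> real \<Rightarrow> 'a::{real_normed_field, banach, second_countable_topology}"
  assumes g: "\<And>i. i \<le> n \<Longrightarrow> integrable lborel (g i)" and w: "(\<Sum>i\<le>n. w i) = 1"
  shows "has_bochner_integral (Pi\<^sub>M {..<n} (\<lambda>_. lborel) \<Otimes>\<^sub>M lborel)
      (\<lambda>(y, S). \<Prod>i\<le>n. g i (hyp_point (Suc n) y i + S * w i)) (\<Prod>i\<le>n. integral\<^sup>L lborel (g i))"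
proof -
  define M where "M = Pi\<^sub>M {..<n} (\<lambda>_. lborel :: real measure)"
  interpret product_sigma_finite "\<lambda>_. lborel :: real measure"
    by (simp add: product_sigma_finite_def sigma_finite_lborel)
  interpret pair_sigma_finite M lborel
    unfolding M_def pair_sigma_finite_def by (simp add: sigma_finite sigma_finite_lborel)
  have [measurable]: "g i \<in> borel_measurable lborel" if "i \<le> n" for i
    using g[OF that] by auto
  let ?shear = "\<lambda>(y, S). (\<lambda>i\<in>{..<n}. y i + S * w i, S * w n - (\<Sum>i<n. y i))"
  have integrable: "integrable M (\<lambda>u. \<Prod>i<n. g i (u i))"
    unfolding M_def using g by (intro product_integrable_prod) auto
  have integral: "integral\<^sup>L M (\<lambda>u. \<Prod>i<n. g i (u i)) = (\<Prod>i<n. integral\<^sup>L lborel (g i))"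
    unfolding M_def using g by (intro product_integral_prod) auto
  let ?tensor = "\<lambda>(u, t). (\<Prod>i<n. g i (u i)) * g n t"
  have tensor: "has_bochner_integral (M \<Otimes>\<^sub>M lborel) ?tensor
      ((\<Prod>i<n. integral\<^sup>L lborel (g i)) * integral\<^sup>L lborel (g n))"
    using has_bochner_integral_pair_mult[OF integrable g[OF order.refl]] by (simp add: integral)
  have "has_bochner_integral (M \<Otimes>\<^sub>M lborel) (\<lambda>z. ?tensor (?shear z)) (\<Prod>i\<le>n. integral\<^sup>L lborel (g i))"
  proof (rule has_bochner_integral_measure_preserving[where f = ?tensor and T = ?shear])
    show "?shear \<in> M \<Otimes>\<^sub>M lborel \<rightarrow>\<^sub>M M \<Otimes>\<^sub>M lborel"
      unfolding M_def by measurable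
    show "distr (M \<Otimes>\<^sub>M lborel) (M \<Otimes>\<^sub>M lborel) ?shear = M \<Otimes>\<^sub>M lborel"
      unfolding M_def by (rule distr_PiM_lborel_shear[OF w])
  qed (use tensor in \<open>simp add: lessThan_Suc_atMost[symmetric]\<close>)
  moreover have "(\<lambda>z. ?tensor (?shear z))
      = (\<lambda>(y, S). \<Prod>i\<le>n. g i (hyp_point (Suc n) y i + S * w i))"
    by (auto simp: fun_eq_iff hyp_point_def lessThan_Suc_atMost[symmetric] algebra_simps)
  ultimately show ?thesis
    by (simp add: M_def)
qed

lemma has_absolute_integral_change_of_variables_1_euclidean:
  fixes f :: "real \<Rightarrow> 'a::euclidean_space" and g :: "real \<Rightarrow> real"
  assumes S: "S \<in> sets lebesgue"
    and der_g: "\<And>x. x \<in> S \<Longrightarrow> (g has_field_derivative g' x) (at x within S)"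
    and inj: "inj_on g S"
    and f: "f absolutely_integrable_on (g ` S)"
  shows "(\<lambda>x. \<bar>g' x\<bar> *\<^sub>R f (g x)) absolutely_integrable_on S
    \<and> integral S (\<lambda>x. \<bar>g' x\<bar> *\<^sub>R f (g x)) = integral (g ` S) f"
proof -
  have component: "(\<lambda>x. \<bar>g' x\<bar> * (f (g x) \<bullet> b)) absolutely_integrable_on S
      \<and> integral S (\<lambda>x. \<bar>g' x\<bar> * (f (g x) \<bullet> b)) = integral (g ` S) f \<bullet> b" for b
  proof -
    have "(\<lambda>t. f t \<bullet> b) absolutely_integrable_on g ` S"
      using f by (rule absolutely_integrable_component)
    moreover have "integral (g ` S) (\<lambda>t. f t \<bullet> b) = integral (g ` S) f \<bullet> b"
      using set_lebesgue_integral_eq_integral(1)[OF f] by (rule integral_component_eq)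
    ultimately show ?thesis
      using has_absolute_integral_change_of_variables_1'[OF S der_g inj,
          of "\<lambda>t. f t \<bullet> b" "integral (g ` S) f \<bullet> b"] by (simp only:)
  qed
  have integrable: "(\<lambda>x. \<bar>g' x\<bar> *\<^sub>R f (g x)) absolutely_integrable_on S"
  proof (rule absolutely_integrable_componentwise)
    fix b :: 'a
    show "(\<lambda>x. (\<bar>g' x\<bar> *\<^sub>R f (g x)) \<bullet> b) absolutely_integrable_on S"
      using conjunct1[OF component[of b]] by simp
  qed
  moreover have "integral S (\<lambda>x. \<bar>g' x\<bar> *\<^sub>R f (g x)) = integral (g ` S) f"
  proof (rule euclidean_eqI)
    fix b :: 'a
    have "integral S (\<lambda>x. \<bar>g' x\<bar> *\<^sub>R f (g x)) \<bullet> b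
        = integral S (\<lambda>x. (\<bar>g' x\<bar> *\<^sub>R f (g x)) \<bullet> b)"
      using set_lebesgue_integral_eq_integral(1)[OF integrable] by (rule integral_component_eq[symmetric])
    also have "\<dots> = integral (g ` S) f \<bullet> b"
      using conjunct2[OF component[of b]] by simp
    finally show "integral S (\<lambda>x. \<bar>g' x\<bar> *\<^sub>R f (g x)) \<bullet> b = integral (g ` S) f \<bullet> b" .
  qed
  ultimately show ?thesis ..
qed

lemma has_bochner_integral_Gamma_exp:
  fixes w :: complex
  assumes w: "Re w > 0"
  shows "has_bochner_integral lborel (\<lambda>u. exp (w * of_real u - of_real (exp u))) (Gamma w)"
proof -
  let ?F = "\<lambda>t. complex_of_real t powr (w - 1) / of_real (exp t)"
  let ?G = "\<lambda>u. exp (w * of_real u - of_real (exp u))"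
  have "exp ` UNIV = {0 :: real<..}"
    by (auto simp: image_iff) (metis exp_ln)
  then have "(\<lambda>u. \<bar>exp u\<bar> *\<^sub>R ?F (exp u)) absolutely_integrable_on UNIV
      \<and> integral UNIV (\<lambda>u. \<bar>exp u\<bar> *\<^sub>R ?F (exp u)) = integral {0<..} ?F"
    using has_absolute_integral_change_of_variables_1_euclidean[of UNIV exp exp ?F]
      absolutely_integrable_Gamma_integral'[OF w]
    by (auto intro: DERIV_exp simp: inj_on_def)
  moreover have "\<bar>exp u\<bar> *\<^sub>R ?F (exp u) = ?G u" for u :: real
  proof -
    have "complex_of_real (exp u) powr (w - 1) = exp ((w - 1) * of_real u)"
      by (simp add: powr_def Ln_of_real)
    then show ?thesis
      by (simp add: scaleR_conv_of_real exp_diff field_simps flip: exp_of_real exp_add)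
  qed
  moreover have "integral {0<..} ?F = Gamma w"
    using Gamma_integral_complex'[OF w] by (rule integral_unique)
  ultimately have "?G absolutely_integrable_on UNIV" and integral: "integral UNIV ?G = Gamma w"
    by simp_all
  then have "integrable lebesgue ?G"
    by (simp add: set_integrable_def)
  moreover have "?G \<in> borel_measurable lborel"
    by measurable
  ultimately show ?thesis
    using integral by (simp add: has_bochner_integral_iff integrable_completion integral_lebesgue
        integral_completion)
qed

lemma has_bochner_integral_exp_exp:
  fixes c \<nu> :: real and z :: complex
  assumes c: "c > 0" and \<nu>: "\<nu> > 0" and z: "Re z > 0"
  shows "has_bochner_integral lborel (\<lambda>x. of_real (exp (- c * exp (- \<nu> * x))) * exp (- (of_real x * z)))
    (Gamma (z / of_real \<nu>) / (of_real \<nu> * of_real c powr (z / of_real \<nu>)))"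
proof -
  define w where "w = z / of_real \<nu>"
  have w: "Re w > 0"
    using z \<nu> by (simp add: w_def Re_divide_of_real)
  let ?G = "\<lambda>x. of_real (exp (- c * exp (- \<nu> * x))) * exp (- (of_real x * z))"
  have substitution: "?G (ln c / \<nu> + (- 1 / \<nu>) * u) = of_real c powr (- w) * exp (w * of_real u - of_real (exp u))"
    for u :: real
  proof -
    have "- \<nu> * (ln c / \<nu> + (- 1 / \<nu>) * u) = u - ln c"
      using \<nu> by (simp add: field_simps)
    then have inner: "- c * exp (- \<nu> * (ln c / \<nu> + (- 1 / \<nu>) * u)) = - exp u"
      using c by (simp add: exp_diff)
    have outer: "- (complex_of_real (ln c / \<nu> + (- 1 / \<nu>) * u) * z) = - w * of_real (ln c) + w * of_real u"
      using \<nu> by (simp add: w_def field_simps)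
    have "?G (ln c / \<nu> + (- 1 / \<nu>) * u) = of_real (exp (- exp u)) * exp (- w * of_real (ln c) + w * of_real u)"
      by (simp only: inner outer)
    also have "\<dots> = exp (- w * of_real (ln c)) * exp (w * of_real u - of_real (exp u))"
      by (simp add: exp_add exp_diff exp_minus field_simps flip: exp_of_real)
    also have "exp (- w * of_real (ln c)) = of_real c powr (- w)"
      using c by (simp add: powr_def Ln_of_real)
    finally show ?thesis .
  qed
  have "has_bochner_integral lborel (\<lambda>u. ?G (ln c / \<nu> + (- 1 / \<nu>) * u)) (of_real c powr (- w) * Gamma w)"
    unfolding substitution using has_bochner_integral_Gamma_exp[OF w] by (rule has_bochner_integral_mult_right)
  moreover have "of_real c powr (- w) * Gamma w = (Gamma w / (of_real \<nu> * of_real c powr w)) /\<^sub>R \<bar>- 1 / \<nu>\<bar>"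
    using c \<nu> by (simp add: powr_minus scaleR_conv_of_real field_simps)
  ultimately show ?thesis
    using \<nu> lborel_has_bochner_integral_real_affine_iff[of "- 1 / \<nu>" ?G _ "ln c / \<nu>"]
    by (simp add: w_def)
qed

lemma sum_hyp_point: "(\<Sum>i\<le>n. hyp_point (Suc n) y i) = 0"
  by (simp add: hyp_point_def lessThan_Suc_atMost[symmetric])

lemma prod_exp_exp_hyp_point:
  fixes c \<nu> w :: "nat \<Rightarrow> real" and z :: complex
  assumes w: "(\<Sum>i\<le>n. w i) = 1" and \<nu>w: "\<And>i. i \<le> n \<Longrightarrow> \<nu> i * w i = q"
  shows "(\<Prod>i\<le>n. of_real (exp (- c i * exp (- \<nu> i * (hyp_point (Suc n) y i + S * w i))))
        * exp (- (of_real (hyp_point (Suc n) y i + S * w i) * z)))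
    = of_real (exp (- (\<Sum>i\<le>n. c i * exp (- \<nu> i * hyp_point (Suc n) y i)) * exp (- q * S)))
      * exp (- (of_real S * z))"
proof -
  have "(\<Sum>i\<le>n. - c i * exp (- \<nu> i * (hyp_point (Suc n) y i + S * w i)))
      = (\<Sum>i\<le>n. - c i * exp (- \<nu> i * hyp_point (Suc n) y i) * exp (- q * S))"
  proof (rule sum.cong)
    fix i assume "i \<in> {..n}"
    then have arg: "- \<nu> i * (hyp_point (Suc n) y i + S * w i) = - \<nu> i * hyp_point (Suc n) y i + - q * S"
      using \<nu>w[of i] by (simp add: algebra_simps)
    show "- c i * exp (- \<nu> i * (hyp_point (Suc n) y i + S * w i))
        = - c i * exp (- \<nu> i * hyp_point (Suc n) y i) * exp (- q * S)"
      by (simp only: arg exp_add mult.assoc)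
  qed simp
  also have "\<dots> = - (\<Sum>i\<le>n. c i * exp (- \<nu> i * hyp_point (Suc n) y i)) * exp (- q * S)"
    by (simp add: sum_distrib_right sum_negf)
  finally have exponent: "(\<Sum>i\<le>n. - c i * exp (- \<nu> i * (hyp_point (Suc n) y i + S * w i)))
      = - (\<Sum>i\<le>n. c i * exp (- \<nu> i * hyp_point (Suc n) y i)) * exp (- q * S)" .
  have first: "(\<Prod>i\<le>n. of_real (exp (- c i * exp (- \<nu> i * (hyp_point (Suc n) y i + S * w i)))))
      = complex_of_real (exp (- (\<Sum>i\<le>n. c i * exp (- \<nu> i * hyp_point (Suc n) y i)) * exp (- q * S)))"
    unfolding exponent[symmetric] by (simp only: exp_sum finite_atMost of_real_prod)
  have "(\<Sum>i\<le>n. - (complex_of_real (hyp_point (Suc n) y i + S * w i) * z))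
      = - (of_real (\<Sum>i\<le>n. hyp_point (Suc n) y i + S * w i) * z)"
    by (simp add: sum_distrib_right sum_negf)
  also have "(\<Sum>i\<le>n. hyp_point (Suc n) y i + S * w i) = S"
    by (simp add: sum.distrib sum_hyp_point w flip: sum_distrib_left)
  finally have second: "(\<Prod>i\<le>n. exp (- (complex_of_real (hyp_point (Suc n) y i + S * w i) * z)))
      = exp (- (of_real S * z))"
    by (simp add: exp_sum[symmetric])
  show ?thesis
    by (simp only: prod.distrib first second)
qed

lemma powr_minus_eq_integral_exp_exp:
  fixes F q :: real and s :: complex
  assumes F: "F > 0" and q: "q > 0" and s: "Re s > 0"
  shows "of_real F powr (- s) = of_real q / Gamma s
    * (\<integral>S. of_real (exp (- F * exp (- q * S))) * exp (- (of_real S * (of_real q * s))) \<partial>lborel)"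
proof -
  have z: "Re (of_real q * s) > 0"
    using q s by simp
  have zq: "of_real q * s / of_real q = s"
    using q by simp
  have "has_bochner_integral lborel
      (\<lambda>S. of_real (exp (- F * exp (- q * S))) * exp (- (of_real S * (of_real q * s))))
      (Gamma s / (of_real q * of_real F powr s))"
    using has_bochner_integral_exp_exp[OF F q z] unfolding zq .
  moreover have "Gamma s \<noteq> 0"
    using s by (intro Gamma_nonzero) (auto elim!: nonpos_Ints_cases)
  ultimately show ?thesis
    using F q by (simp add: has_bochner_integral_integral_eq powr_minus field_simps)
qed

lemma has_bochner_integral_sum_exp_hyp_point_powr:
  fixes c \<nu> :: "nat \<Rightarrow> real" and s :: complex
  assumes c: "\<And>i. i \<le> n \<Longrightarrow> c i > 0" and \<nu>: "\<And>i. i \<le> n \<Longrightarrow> \<nu> i > 0" and s: "Re s > 0"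
  defines "q \<equiv> 1 / (\<Sum>i\<le>n. 1 / \<nu> i)"
  shows "has_bochner_integral (Pi\<^sub>M {..<n} (\<lambda>_. lborel))
      (\<lambda>y. of_real (\<Sum>i\<le>n. c i * exp (- \<nu> i * hyp_point (Suc n) y i)) powr (- s))
      (of_real q / Gamma s * (\<Prod>i\<le>n. Gamma (of_real (q / \<nu> i) * s)
        / (of_real (\<nu> i) * of_real (c i) powr (of_real (q / \<nu> i) * s))))"
proof -
  define M where "M = Pi\<^sub>M {..<n} (\<lambda>_. lborel :: real measure)"
  interpret pair_sigma_finite M lborel
    unfolding M_def pair_sigma_finite_def
    by (simp add: product_sigma_finite.sigma_finite product_sigma_finite_def sigma_finite_lborel)
  have "(\<Sum>i\<le>n. 1 / \<nu> i) > 0"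
    using \<nu> by (intro sum_pos) auto
  moreover have "(\<Sum>i\<le>n. q / \<nu> i) = q * (\<Sum>i\<le>n. 1 / \<nu> i)"
    by (simp add: sum_distrib_left)
  ultimately have q: "q > 0" and w: "(\<Sum>i\<le>n. q / \<nu> i) = 1"
    by (simp_all add: q_def)
  have \<nu>w: "\<nu> i * (q / \<nu> i) = q" if "i \<le> n" for i
    using \<nu>[OF that] by simp
  define z where "z = of_real q * s"
  have z: "Re z > 0"
    using q s by (simp add: z_def)
  define g where "g i t = of_real (exp (- c i * exp (- \<nu> i * t))) * exp (- (of_real t * z))" for i t
  have z\<nu>: "z / of_real (\<nu> i) = of_real (q / \<nu> i) * s" for i
    by (simp add: z_def)
  have g: "has_bochner_integral lborel (g i) (Gamma (of_real (q / \<nu> i) * s)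
      / (of_real (\<nu> i) * of_real (c i) powr (of_real (q / \<nu> i) * s)))" if "i \<le> n" for i
    using has_bochner_integral_exp_exp[OF c[OF that] \<nu>[OF that] z] unfolding g_def[abs_def] z\<nu> .
  define F where "F y = (\<Sum>i\<le>n. c i * exp (- \<nu> i * hyp_point (Suc n) y i))" for y
  have F: "F y > 0" for y
    using c by (auto simp: F_def intro!: sum_pos)
  define \<Phi> where "\<Phi> = (\<lambda>(y, S). \<Prod>i\<le>n. g i (hyp_point (Suc n) y i + S * (q / \<nu> i)))"
  have \<Phi>: "has_bochner_integral (M \<Otimes>\<^sub>M lborel) \<Phi> (\<Prod>i\<le>n. integral\<^sup>L lborel (g i))"
    unfolding \<Phi>_def M_def by (rule has_bochner_integral_prod_hyp_point[OF integrable.intros[OF g] w])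
  have \<Phi>_fiber: "\<Phi> (y, S) = of_real (exp (- F y * exp (- q * S))) * exp (- (of_real S * z))" for y S
    unfolding \<Phi>_def g_def F_def prod.case by (rule prod_exp_exp_hyp_point[OF w \<nu>w])
  have pointwise: "of_real (F y) powr (- s) = of_real q / Gamma s * integral\<^sup>L lborel (\<lambda>S. \<Phi> (y, S))" for y
    unfolding \<Phi>_fiber z_def by (rule powr_minus_eq_integral_exp_exp[OF F q s])
  have fubini: "has_bochner_integral M (\<lambda>y. integral\<^sup>L lborel (\<lambda>S. \<Phi> (y, S))) (\<Prod>i\<le>n. integral\<^sup>L lborel (g i))"
    using \<Phi> integrable_fst'[of \<Phi>] integral_fst'[of \<Phi>] by (simp add: has_bochner_integral_iff)
  have integral_g: "(\<Prod>i\<le>n. integral\<^sup>L lborel (g i)) = (\<Prod>i\<le>n. Gamma (of_real (q / \<nu> i) * s)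
      / (of_real (\<nu> i) * of_real (c i) powr (of_real (q / \<nu> i) * s)))"
    using g by (intro prod.cong refl has_bochner_integral_integral_eq) auto
  show ?thesis
    using has_bochner_integral_mult_right[OF fubini, of "of_real q / Gamma s"]
    unfolding pointwise[symmetric] integral_g M_def F_def .
qed

lemma powr_of_real_prod_powr:
  fixes a t :: "'i \<Rightarrow> real" and s :: complex
  assumes "finite I" and "\<And>i. i \<in> I \<Longrightarrow> a i > 0"
  shows "complex_of_real (\<Prod>i\<in>I. a i powr t i) powr s = (\<Prod>i\<in>I. of_real (a i) powr (of_real (t i) * s))"
proof -
  have powr_exp_ln: "complex_of_real x powr w = exp (w * of_real (ln x))" if "x > 0" for x w
    using that by (simp add: powr_def Ln_of_real)
  have nonzero: "a i \<noteq> 0" if "i \<in> I" for i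
    using assms(2)[OF that] by simp
  have "ln (\<Prod>i\<in>I. a i powr t i) = (\<Sum>i\<in>I. ln (a i powr t i))"
    using assms(1) nonzero by (intro ln_prod) auto
  also have "\<dots> = (\<Sum>i\<in>I. t i * ln (a i))"
    using nonzero by (intro sum.cong) (auto simp: ln_powr)
  finally have ln_prod_powr: "ln (\<Prod>i\<in>I. a i powr t i) = (\<Sum>i\<in>I. t i * ln (a i))" .
  have "(\<Prod>i\<in>I. a i powr t i) > 0"
    using nonzero by (intro prod_pos) simp
  then have "complex_of_real (\<Prod>i\<in>I. a i powr t i) powr s = exp (s * of_real (\<Sum>i\<in>I. t i * ln (a i)))"
    by (simp only: powr_exp_ln ln_prod_powr)
  also have "\<dots> = exp (\<Sum>i\<in>I. of_real (t i) * s * of_real (ln (a i)))"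
    by (simp add: sum_distrib_left mult_ac)
  also have "\<dots> = (\<Prod>i\<in>I. of_real (a i) powr (of_real (t i) * s))"
    using assms by (simp add: exp_sum powr_exp_ln)
  finally show ?thesis .
qed

corollary has_bochner_integral_sum_exp_hyp_point_powr_closed_form:
  fixes c \<nu> :: "nat \<Rightarrow> real" and s :: complex
  assumes c: "\<And>i. i \<le> n \<Longrightarrow> c i > 0" and \<nu>: "\<And>i. i \<le> n \<Longrightarrow> \<nu> i > 0" and s: "Re s > 0"
  defines "q \<equiv> 1 / (\<Sum>i\<le>n. 1 / \<nu> i)"
  shows "has_bochner_integral (Pi\<^sub>M {..<n} (\<lambda>_. lborel))
      (\<lambda>y. of_real (\<Sum>i\<le>n. c i * exp (- \<nu> i * hyp_point (Suc n) y i)) powr (- s))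
      (of_real (q / (\<Prod>i\<le>n. \<nu> i)) * of_real (\<Prod>i\<le>n. c i powr (q / \<nu> i)) powr (- s)
        * inverse (Gamma s) * (\<Prod>i\<le>n. Gamma (of_real (q / \<nu> i) * s)))"
proof -
  define P where "P = (\<Prod>i\<le>n. of_real (c i) powr (of_real (q / \<nu> i) * s))"
  define V where "V = (\<Prod>i\<le>n. complex_of_real (\<nu> i))"
  define G where "G = (\<Prod>i\<le>n. Gamma (of_real (q / \<nu> i) * s))"
  have "(\<Prod>i\<le>n. Gamma (of_real (q / \<nu> i) * s) / (of_real (\<nu> i) * of_real (c i) powr (of_real (q / \<nu> i) * s)))
      = G / (V * P)"
    by (simp add: G_def V_def P_def prod_dividef prod.distrib)
  moreover have "complex_of_real (\<Prod>i\<le>n. c i powr (q / \<nu> i)) powr (- s) = inverse P"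
    unfolding powr_minus P_def using c by (subst powr_of_real_prod_powr) auto
  moreover have "complex_of_real (q / (\<Prod>i\<le>n. \<nu> i)) = of_real q / V"
    by (simp add: V_def)
  ultimately show ?thesis
    using has_bochner_integral_sum_exp_hyp_point_powr[of n c \<nu> s, OF c \<nu> s, folded q_def]
    by (simp only: G_def[symmetric]) (simp add: divide_inverse inverse_mult_distrib mult_ac)
qed

theorem mainTheorem10:
  fixes N :: nat and c :: "nat \<Rightarrow> real" and \<nu> :: "nat \<Rightarrow> nat" and s :: complex
  assumes "N \<ge> 2"
    and "\<forall>i<N. c i > 0"
    and "\<forall>i<N. \<nu> i > 0"
    and "Re s > 0"
  defines "q \<equiv> 1 / (\<Sum>i<N. 1 / real (\<nu> i))"
  shows "integrable (Pi\<^sub>M {..<N - 1} (\<lambda>_. lborel))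
           (\<lambda>y. complex_of_real (\<Sum>i<N. c i * exp (- real (\<nu> i) * hyp_point N y i)) powr (- s))
       \<and> integral\<^sup>L (Pi\<^sub>M {..<N - 1} (\<lambda>_. lborel))
           (\<lambda>y. complex_of_real (\<Sum>i<N. c i * exp (- real (\<nu> i) * hyp_point N y i)) powr (- s))
         = complex_of_real (q / real (\<Prod>i<N. \<nu> i))
           * complex_of_real (\<Prod>i<N. c i powr (q / real (\<nu> i))) powr (- s)
           * inverse (Gamma s)
           * (\<Prod>i<N. Gamma (complex_of_real (q / real (\<nu> i)) * s))"
proof -
  obtain n where N: "N = Suc n"
    using assms(1) by (cases N) auto
  then have atMost: "{..<N} = {..n}" and lessThan: "{..<N - 1} = {..<n}"
    by (simp_all add: lessThan_Suc_atMost)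
  have c: "c i > 0" and \<nu>: "real (\<nu> i) > 0" if "i \<le> n" for i
    using assms(2,3) that by (auto simp: N)
  have q: "q = 1 / (\<Sum>i\<le>n. 1 / real (\<nu> i))"
    by (simp add: q_def atMost)
  show ?thesis
    using has_bochner_integral_sum_exp_hyp_point_powr_closed_form[of n c "\<lambda>i. real (\<nu> i)" s, OF c \<nu> assms(4), folded q]
    unfolding has_bochner_integral_iff N[symmetric] atMost lessThan of_nat_prod .
qed

end
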